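(* If (a) $\mathrm{Sol}(0)$ is a singleton and (b) $X^\infty\cap\mathcal{K}(f)=\{0\}$, then the set-valued map $\mathrm{Sol}(\cdot)$ is lower semicontinuous at $0$. Conversely, if $\mathrm{Sol}(\cdot)$ is lower semicontinuous at $0$, then (a) holds; and if in addition $X$ and $f$ are convex, then (b) holds as well.
   Context: Standing assumptions: $f:\mathbb{R}^n\to\mathbb{R}\cup\{\pm\infty\}$ is proper (never $-\infty$ and finite at some point) and lower semicontinuous; $X\subset\mathbb{R}^n$ is a nonempty closed set with $\operatorname{dom}f\cap X$ unbounded. $X^\infty=\{u:\exists t_k\to+\infty,\ \exists x_k\in X,\ x_k/t_k\to u\}$; $f^\infty(d)=\inf\{\liminf_{k} f(t_kd_k)/t_k:\ t_k\to+\infty,\ d_k\to d\}$; $\mathcal{K}(f)=\{d: f^\infty(d)\le 0\}$. For $u\in\mathbb{R}^n$, $f_u(x)=f(x)-\langle u,x\rangle$ and $\mathrm{Sol}(u)=\{x\in X: f_u(x)\le f_u(y)\ \forall y\in X\}$. A set-valued map $F$ is lower semicontinuous at $\bar u$ if $F(\bar u)\ne\emptyset$ and for every open $V$ with $F(\bar u)\cap V\ne\emptyset$ there is a neighborhood $U$ of $\bar u$ with $F(u)\cap V\neq\emptyset$ for all $u\in U$. *)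

theory Defs
  imports "HOL-Analysis.Analysis"
begin

definition proper_fun :: "('a \<Rightarrow> ereal) \<Rightarrow> bool" where
  "proper_fun f \<longleftrightarrow> (\<forall>x. f x \<noteq> -\<infinity>) \<and> (\<exists>x. f x \<noteq> \<infinity>)"

definition lsc_fun :: "('a::topological_space \<Rightarrow> ereal) \<Rightarrow> bool" where
  "lsc_fun f \<longleftrightarrow> (\<forall>a. closed {x. f x \<le> a})"

definition edom :: "('a \<Rightarrow> ereal) \<Rightarrow> 'a set" where
  "edom f = {x. f x < \<infinity>}"

definition convex_efun :: "('a::real_vector \<Rightarrow> ereal) \<Rightarrow> bool" where
  "convex_efun f \<longleftrightarrow> convex {(x, t::real). f x \<le> ereal t}"

definition asym_cone :: "'a::real_normed_vector set \<Rightarrow> 'a set" where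
  "asym_cone X = {u. \<exists>t x. filterlim t at_top sequentially \<and> (\<forall>k. x k \<in> X)
                       \<and> (\<lambda>k. (1 / t k) *\<^sub>R x k) \<longlonglongrightarrow> u}"

definition asym_fun :: "('a::real_normed_vector \<Rightarrow> ereal) \<Rightarrow> 'a \<Rightarrow> ereal" where
  "asym_fun f d = Inf {liminf (\<lambda>k. f (t k *\<^sub>R e k) / ereal (t k)) | t e.
                        filterlim t at_top sequentially \<and> e \<longlonglongrightarrow> d}"

definition Kf :: "('a::real_normed_vector \<Rightarrow> ereal) \<Rightarrow> 'a set" where
  "Kf f = {d. asym_fun f d \<le> 0}"

definition tilt :: "('a::real_inner \<Rightarrow> ereal) \<Rightarrow> 'a \<Rightarrow> 'a \<Rightarrow> ereal" where
  "tilt f u x = f x - ereal (inner u x)"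

definition Sol :: "('a::real_inner \<Rightarrow> ereal) \<Rightarrow> 'a set \<Rightarrow> 'a \<Rightarrow> 'a set" where
  "Sol f X u = {x \<in> X. \<forall>y\<in>X. tilt f u x \<le> tilt f u y}"

definition lsc_setmap :: "('a::topological_space \<Rightarrow> 'b::topological_space set) \<Rightarrow> 'a \<Rightarrow> bool" where
  "lsc_setmap F u0 \<longleftrightarrow> F u0 \<noteq> {} \<and>
     (\<forall>V. open V \<and> F u0 \<inter> V \<noteq> {} \<longrightarrow>
        (\<exists>U. open U \<and> u0 \<in> U \<and> (\<forall>u\<in>U. F u \<inter> V \<noteq> {})))"

end

theory Submission
  imports Defs
begin

text \<open>
  Sufficiency: by (b), the tilted level sets through the unique minimizer \<open>x0\<close> of \<open>f\<close> on \<open>X\<close>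
  stay in one ball for all small tilts \<open>u\<close>, since a normalized escaping sequence would converge
  to a unit vector of \<open>X\<^sup>\<infinity> \<inter> \<K>(f)\<close>. So \<open>Sol(u)\<close> is nonempty and lies in a fixed compact set
  for small \<open>u\<close>; its graph is closed, so limits of points of \<open>Sol(u\<^sub>k)\<close> with \<open>u\<^sub>k \<rightarrow> 0\<close> lie in
  \<open>Sol(0) = {x0}\<close>, which gives lower semicontinuity.

  Necessity of (a): if \<open>x\<^sub>1 \<noteq> x\<^sub>2\<close> both minimize \<open>f\<close>, every minimizer \<open>z\<close> of the problem tilted
  by a small positive multiple of \<open>w = x\<^sub>2 - x\<^sub>1\<close> satisfies \<open>\<langle>w, z\<rangle> \<ge> \<langle>w, x\<^sub>2\<rangle>\<close>, so none is close
  to \<open>x\<^sub>1\<close>. Necessity of (b) for convex data: a direction \<open>d \<in> X\<^sup>\<infinity> \<inter> \<K>(f)\<close> is a direction of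
  recession of both \<open>X\<close> and \<open>f\<close>, so \<open>x0 + d\<close> is again a minimizer and \<open>d = 0\<close>.
\<close>

lemma lsc_fun_eventually_gt:
  assumes "lsc_fun g" "(x \<longlongrightarrow> z) F" "a < g z"
  shows "eventually (\<lambda>k. a < g (x k)) F"
proof -
  have "{y. a < g y} = - {y. g y \<le> a}" by auto
  then have "open {y. a < g y}"
    using assms(1) by (simp add: lsc_fun_def open_Compl)
  with assms(2,3) show ?thesis
    using topological_tendstoD by fastforce
qed

lemma lsc_funI:
  assumes "\<And>z a. a < g z \<Longrightarrow> eventually (\<lambda>y. a < g y) (nhds z)"
  shows "lsc_fun g"
  unfolding lsc_fun_def
proof
  fix a
  have "open {y. a < g y}"
    unfolding open_subopen[of "{y. a < g y}"]
    using assms by (fastforce simp: eventually_nhds)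
  moreover have "{y. a < g y} = - {y. g y \<le> a}" by auto
  ultimately show "closed {y. g y \<le> a}"
    by (metis closed_open double_complement)
qed

lemma lsc_fun_le_of_frequently:
  assumes "lsc_fun g" "(x \<longlongrightarrow> z) F" "(c \<longlongrightarrow> c0) F"
    and "frequently (\<lambda>k. g (x k) \<le> ereal (c k)) F"
  shows "g z \<le> ereal c0"
proof (rule ccontr)
  assume "\<not> g z \<le> ereal c0"
  then have "ereal c0 < g z" by simp
  then obtain s where "ereal c0 < ereal s" "ereal s < g z"
    using ereal_dense2 by blast
  then have "c0 < s" by simp
  have "eventually (\<lambda>k. ereal s < g (x k)) F"
    using lsc_fun_eventually_gt[OF assms(1,2) \<open>ereal s < g z\<close>] .
  moreover have "eventually (\<lambda>k. c k < s) F"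
    using order_tendstoD(2)[OF assms(3) \<open>c0 < s\<close>] .
  ultimately have "eventually (\<lambda>k. \<not> g (x k) \<le> ereal (c k)) F"
  proof eventually_elim
    case (elim k)
    then have "ereal (c k) < g (x k)"
      using less_trans[of "ereal (c k)" "ereal s"] by simp
    then show ?case by simp
  qed
  with assms(4) show False
    by (simp add: frequently_def)
qed

lemma lsc_fun_attains_min:
  assumes "lsc_fun g" "compact K" "K \<noteq> {}"
  shows "\<exists>z\<in>K. \<forall>y\<in>K. g z \<le> g y"
proof -
  define I where "I = (INF y\<in>K. g y)"
  have "K \<inter> (\<Inter>a\<in>{a. I < a}. {y. g y \<le> a}) \<noteq> {}"
  proof (rule compact_imp_fip_image[OF assms(2)])
    show "closed {y. g y \<le> a}" for a
      using assms(1) by (simp add: lsc_fun_def)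
  next
    fix A assume A: "finite A" "A \<subseteq> {a. I < a}"
    show "K \<inter> (\<Inter>a\<in>A. {y. g y \<le> a}) \<noteq> {}"
    proof (cases "A = {}")
      case False
      with A have "I < Min A" by auto
      then obtain y where y: "y \<in> K" "g y < Min A"
        by (auto simp: I_def INF_less_iff)
      have "g y \<le> a" if "a \<in> A" for a
        using Min_le[OF A(1) that] y(2) by simp
      with y(1) show ?thesis by blast
    qed (use assms(3) in simp)
  qed
  then obtain z where z: "z \<in> K" "\<And>a. I < a \<Longrightarrow> g z \<le> a" by blast
  have "g z \<le> I" by (rule dense_ge) (rule z(2))
  then show ?thesis
    using z(1) unfolding I_def by (meson INF_lower order_trans)
qed

lemma lsc_fun_tilt:
  assumes "lsc_fun f" "\<forall>x. f x \<noteq> -\<infinity>"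
  shows "lsc_fun (tilt f u)"
proof (rule lsc_funI)
  fix z and a :: ereal
  assume a: "a < tilt f u z"
  show "eventually (\<lambda>y. a < tilt f u y) (nhds z)"
  proof (cases a)
    case MInf
    have "-\<infinity> < tilt f u y" for y
      using assms(2) by (cases "f y") (auto simp: tilt_def)
    then show ?thesis using MInf by (simp add: always_eventually)
  next
    case PInf
    then show ?thesis using a by simp
  next
    case (real r)
    then have "ereal (r + u \<bullet> z) < f z" using a
      by (cases "f z") (auto simp: tilt_def)
    then obtain s where "ereal (r + u \<bullet> z) < ereal s" "ereal s < f z"
      using ereal_dense2 by blast
    then have s: "r + u \<bullet> z < s" "ereal s < f z" by simp_all
    have "eventually (\<lambda>y. ereal s < f y) (nhds z)"
      using lsc_fun_eventually_gt[OF assms(1) filterlim_ident s(2)] .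
    moreover have "eventually (\<lambda>y. u \<bullet> y < s - r) (nhds z)"
      using s(1)
      by (intro order_tendstoD(2)[of "\<lambda>y. u \<bullet> y" "u \<bullet> z"] tendsto_intros filterlim_ident) simp
    ultimately show ?thesis
    proof eventually_elim
      case (elim y)
      then show ?case using real by (cases "f y") (auto simp: tilt_def)
    qed
  qed
qed

lemma frequently_less_of_Liminf_less:
  fixes g :: "'b \<Rightarrow> 'c::complete_linorder"
  assumes "Liminf F g < c"
  shows "frequently (\<lambda>k. g k < c) F"
proof -
  from assms have "\<not> c \<le> Liminf F g" by simp
  then obtain y where "y < c" "\<not> eventually (\<lambda>k. y < g k) F"
    unfolding le_Liminf_iff by blast
  then show ?thesis
    by (auto simp: not_eventually not_less elim: frequently_elim1 intro: le_less_trans)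
qed

lemma ereal_divide_le:
  assumes "g \<le> ereal c" "0 < t"
  shows "g / ereal t \<le> ereal (c / t)"
  using assms by (cases g) (auto simp: divide_right_mono)

lemma ereal_divide_less_imp_le:
  assumes "g / ereal t < ereal c" "0 < t"
  shows "g \<le> ereal (c * t)"
  using assms by (cases g) (auto simp: pos_divide_less_eq)

lemma eventually_ge_of_filterlim_at_top:
  "filterlim t at_top F \<Longrightarrow> eventually (\<lambda>k. (c::real) \<le> t k) F"
  by (simp add: filterlim_at_top)

lemma tilt_zero [simp]: "tilt f 0 x = f x"
  by (simp add: tilt_def)

lemma tilt_le_imp_le:
  assumes "tilt f u x \<le> tilt f u y" "f y = ereal b"
  shows "f x \<le> ereal (b + u \<bullet> (x - y))"
  using assms by (cases "f x") (auto simp: tilt_def inner_diff_right)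

lemma Sol_zero_finite:
  assumes "proper_fun f" "edom f \<inter> X \<noteq> {}" "x \<in> Sol f X 0"
  shows "\<exists>m. f x = ereal m"
proof -
  obtain y where "y \<in> X" "f y < \<infinity>"
    using assms(2) by (auto simp: edom_def)
  with assms(3) have "f x < \<infinity>"
    by (auto simp: Sol_def intro: le_less_trans)
  moreover have "f x \<noteq> -\<infinity>"
    using assms(1) by (simp add: proper_fun_def)
  ultimately show ?thesis by (cases "f x") auto
qed

lemma Sol_zero_inner_le:
  assumes "x \<in> Sol f X 0" "z \<in> Sol f X u" "f x = ereal m"
  shows "u \<bullet> x \<le> u \<bullet> z"
proof -
  have "f z \<le> ereal (m + u \<bullet> (z - x))"
    using assms by (intro tilt_le_imp_le) (auto simp: Sol_def)
  moreover have "ereal m \<le> f z"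
    using assms by (auto simp: Sol_def)
  ultimately have "ereal m \<le> ereal (m + u \<bullet> (z - x))" by (rule order_trans[rotated])
  then have "m \<le> m + u \<bullet> (z - x)" by simp
  then show ?thesis by (simp add: inner_diff_right)
qed

lemma Sol_closed_graph:
  assumes "lsc_fun f" "\<forall>x. f x \<noteq> -\<infinity>" "closed X"
    and "u \<longlonglongrightarrow> u0" "\<forall>k. z k \<in> Sol f X (u k)" "z \<longlonglongrightarrow> z0"
  shows "z0 \<in> Sol f X u0"
proof -
  have "\<forall>k. z k \<in> X" using assms(5) by (simp add: Sol_def)
  then have "z0 \<in> X"
    using assms(3,6) closed_sequentially by blast
  moreover have "tilt f u0 z0 \<le> tilt f u0 y" if "y \<in> X" for y
  proof (cases "f y")
    case (real b)
    have "f (z k) \<le> ereal (b + u k \<bullet> (z k - y))" for k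
      using assms(5) that real by (intro tilt_le_imp_le) (auto simp: Sol_def)
    then have "frequently (\<lambda>k. f (z k) \<le> ereal (b + u k \<bullet> (z k - y))) sequentially"
      by (simp add: always_eventually eventually_frequently)
    moreover have "(\<lambda>k. b + u k \<bullet> (z k - y)) \<longlonglongrightarrow> b + u0 \<bullet> (z0 - y)"
      using assms(4,6) by (intro tendsto_intros)
    ultimately have "f z0 \<le> ereal (b + u0 \<bullet> (z0 - y))"
      by (intro lsc_fun_le_of_frequently[OF assms(1,6)])
    then show ?thesis
      using real by (cases "f z0") (auto simp: tilt_def inner_diff_right)
  next
    case PInf
    then show ?thesis by (simp add: tilt_def)
  next
    case MInf
    then show ?thesis using assms(2) by simp
  qed
  ultimately show ?thesis by (simp add: Sol_def)
qed

lemma Sol_nonempty_if_level_bounded: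
  fixes f :: "'a::euclidean_space \<Rightarrow> ereal"
  assumes "lsc_fun f" "\<forall>x. f x \<noteq> -\<infinity>" "closed X" "x0 \<in> X"
    and level_bounded: "\<And>x. x \<in> X \<Longrightarrow> tilt f u x \<le> tilt f u x0 \<Longrightarrow> norm x \<le> R"
  shows "Sol f X u \<noteq> {}"
proof -
  let ?K = "cball 0 R \<inter> X"
  have "x0 \<in> ?K" using assms(4) level_bounded by simp
  moreover have "compact ?K"
    using assms(3) by (intro compact_Int_closed) auto
  ultimately obtain z where z: "z \<in> ?K" "\<forall>y\<in>?K. tilt f u z \<le> tilt f u y"
    using lsc_fun_attains_min[OF lsc_fun_tilt[OF assms(1,2)]] by blast
  have "tilt f u z \<le> tilt f u y" if "y \<in> X" for y
  proof (cases "norm y \<le> R")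
    case False
    then have "\<not> tilt f u y \<le> tilt f u x0"
      using level_bounded[OF that] by auto
    then have "tilt f u x0 < tilt f u y" by simp
    moreover have "tilt f u z \<le> tilt f u x0" using z(2) \<open>x0 \<in> ?K\<close> by blast
    ultimately show ?thesis by simp
  qed (use z that in auto)
  with z(1) show ?thesis by (auto simp: Sol_def)
qed

lemma Kf_memI:
  assumes t: "filterlim t at_top sequentially" and e: "e \<longlonglongrightarrow> d"
    and bound: "eventually (\<lambda>k. f (t k *\<^sub>R e k) \<le> ereal (b k)) sequentially"
    and b: "(\<lambda>k. b k / t k) \<longlonglongrightarrow> 0"
  shows "d \<in> Kf f"
proof -
  have "eventually (\<lambda>k. f (t k *\<^sub>R e k) / ereal (t k) \<le> ereal (b k / t k)) sequentially"
    using bound eventually_ge_of_filterlim_at_top[OF t, of 1]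
    by eventually_elim (simp add: ereal_divide_le)
  then have "liminf (\<lambda>k. f (t k *\<^sub>R e k) / ereal (t k)) \<le> liminf (\<lambda>k. ereal (b k / t k))"
    by (rule Liminf_mono)
  also have "\<dots> = 0"
    using lim_imp_Liminf[OF _ tendsto_ereal[OF b]] by (simp add: zero_ereal_def)
  finally have "asym_fun f d \<le> 0"
    unfolding asym_fun_def using t e by (blast intro: Inf_lower2)
  then show ?thesis by (simp add: Kf_def)
qed

lemma zero_in_Kf:
  assumes "proper_fun f"
  shows "0 \<in> Kf f"
proof -
  obtain y where "f y \<noteq> \<infinity>" "f y \<noteq> -\<infinity>"
    using assms by (auto simp: proper_fun_def)
  then obtain c where "f y = ereal c" by (cases "f y") auto
  have bound: "eventually (\<lambda>k. f (real k *\<^sub>R ((1 / real k) *\<^sub>R y)) \<le> ereal c) sequentially"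
    using eventually_gt_at_top[of 0] by eventually_elim (simp add: \<open>f y = ereal c\<close>)
  have "(\<lambda>k. (1 / real k) *\<^sub>R y) \<longlonglongrightarrow> 0"
    using tendsto_scaleR[OF lim_1_over_n tendsto_const[of y]] by simp
  from Kf_memI[OF filterlim_real_sequentially this bound lim_const_over_n]
  show ?thesis .
qed

lemma zero_in_asym_cone:
  assumes "X \<noteq> {}"
  shows "(0::'a::real_normed_vector) \<in> asym_cone X"
proof -
  obtain x where "x \<in> X" using assms by blast
  have "(\<lambda>k. (1 / real k) *\<^sub>R x) \<longlonglongrightarrow> 0"
    using tendsto_scaleR[OF lim_1_over_n tendsto_const[of x]] by simp
  then show ?thesis
    unfolding asym_cone_def using \<open>x \<in> X\<close> filterlim_real_sequentially
    by (intro CollectI exI[of _ real] exI[of _ "\<lambda>_. x"]) auto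
qed

lemma normalized_subseq_tendsto:
  fixes Y :: "nat \<Rightarrow> 'a::euclidean_space"
  assumes "\<And>k. Y k \<noteq> 0"
  obtains r d where "strict_mono r" "norm d = 1"
    "(\<lambda>k. (1 / norm (Y (r k))) *\<^sub>R Y (r k)) \<longlonglongrightarrow> d"
proof -
  let ?y = "\<lambda>k. (1 / norm (Y k)) *\<^sub>R Y k"
  have "\<forall>k. ?y k \<in> sphere 0 1"
    using assms by simp
  from seq_compactE[OF compact_imp_seq_compact[OF compact_sphere], where f = ?y, OF this]
  obtain d r where "d \<in> sphere 0 1" "strict_mono r" "(?y \<circ> r) \<longlonglongrightarrow> d" .
  with that show thesis by (simp add: comp_def)
qed

lemma Kf_mem_of_tilt_level:
  fixes f :: "'a::real_inner \<Rightarrow> ereal"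
  assumes "f x0 = ereal m" and tilt_le: "\<And>k. tilt f (U k) (Y k) \<le> tilt f (U k) x0"
    and U: "U \<longlonglongrightarrow> 0" and t: "filterlim (\<lambda>k. norm (Y k)) at_top sequentially"
    and d: "(\<lambda>k. (1 / norm (Y k)) *\<^sub>R Y k) \<longlonglongrightarrow> d"
  shows "d \<in> Kf f"
proof (rule Kf_memI[OF t d])
  define b where "b k = m + norm (U k) * (norm (Y k) + norm x0)" for k
  show "eventually (\<lambda>k. f (norm (Y k) *\<^sub>R ((1 / norm (Y k)) *\<^sub>R Y k)) \<le> ereal (b k)) sequentially"
    using eventually_ge_of_filterlim_at_top[OF t, of 1]
  proof eventually_elim
    case (elim k)
    have "U k \<bullet> (Y k - x0) \<le> norm (U k) * norm (Y k - x0)"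
      using Cauchy_Schwarz_ineq2 abs_ge_self order_trans by blast
    also have "\<dots> \<le> norm (U k) * (norm (Y k) + norm x0)"
      by (intro mult_left_mono norm_triangle_ineq4) simp
    finally have "ereal (m + U k \<bullet> (Y k - x0)) \<le> ereal (b k)"
      by (simp add: b_def)
    with tilt_le_imp_le[OF tilt_le assms(1)] have "f (Y k) \<le> ereal (b k)"
      by (rule order_trans)
    moreover have "Y k \<noteq> 0" using elim by auto
    ultimately show ?case by simp
  qed
  have "(\<lambda>k. 1 / norm (Y k)) \<longlonglongrightarrow> 0"
    using tendsto_inverse_0_at_top[OF t] by (simp add: divide_inverse)
  then have "(\<lambda>k. m * (1 / norm (Y k)) + norm (U k) + norm (U k) * norm x0 * (1 / norm (Y k)))
      \<longlonglongrightarrow> m * 0 + norm (0::'a) + norm (0::'a) * norm x0 * 0"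
    by (intro tendsto_intros U)
  moreover have "eventually (\<lambda>k. m * (1 / norm (Y k)) + norm (U k) + norm (U k) * norm x0 * (1 / norm (Y k))
      = b k / norm (Y k)) sequentially"
    using eventually_ge_of_filterlim_at_top[OF t, of 1]
  proof eventually_elim
    case (elim k)
    then have "norm (Y k) \<noteq> 0" by auto
    then show ?case by (simp add: b_def field_simps)
  qed
  ultimately show "(\<lambda>k. b k / norm (Y k)) \<longlonglongrightarrow> 0"
    by (simp add: Lim_transform_eventually)
qed

lemma uniformly_level_bounded:
  fixes f :: "'a::euclidean_space \<Rightarrow> ereal"
  assumes "x0 \<in> X" "f x0 = ereal m" "asym_cone X \<inter> Kf f = {0}"
  shows "\<exists>\<delta>>0. \<exists>R. \<forall>u x.
           norm u < \<delta> \<longrightarrow> x \<in> X \<longrightarrow> tilt f u x \<le> tilt f u x0 \<longrightarrow> norm x \<le> R"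
proof (rule ccontr)
  assume unbounded: "\<not> ?thesis"
  have "\<exists>u x. norm u < 1 / real (Suc k) \<and> x \<in> X \<and> tilt f u x \<le> tilt f u x0 \<and> real k < norm x"
    for k
  proof -
    have "0 < 1 / real (Suc k)" by simp
    with unbounded obtain u x where "norm u < 1 / real (Suc k)" "x \<in> X"
      "tilt f u x \<le> tilt f u x0" "\<not> norm x \<le> real k"
      by blast
    then show ?thesis by (auto simp: not_le)
  qed
  then obtain U Y where U: "\<And>k. norm (U k) < 1 / real (Suc k)" and Y: "\<And>k. Y k \<in> X"
    and tilt_le: "\<And>k. tilt f (U k) (Y k) \<le> tilt f (U k) x0" and norm_Y: "\<And>k. real k < norm (Y k)"
    by metis
  have "Y k \<noteq> 0" for k
    using norm_Y[of k] by auto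
  then obtain r d where r: "strict_mono r" and "norm d = 1"
    and d: "(\<lambda>k. (1 / norm (Y (r k))) *\<^sub>R Y (r k)) \<longlonglongrightarrow> d"
    by (rule normalized_subseq_tendsto)
  have t: "filterlim (\<lambda>k. norm (Y (r k))) at_top sequentially"
  proof (rule filterlim_at_top_mono[OF filterlim_real_sequentially always_eventually], rule allI)
    fix k
    have "real k \<le> real (r k)" using seq_suble[OF r] by simp
    also have "\<dots> < norm (Y (r k))" by (rule norm_Y)
    finally show "real k \<le> norm (Y (r k))" by simp
  qed
  have "d \<in> asym_cone X"
    unfolding asym_cone_def using t d Y
    by (intro CollectI exI[of _ "\<lambda>k. norm (Y (r k))"] exI[of _ "\<lambda>k. Y (r k)"]) simp
  moreover have "(\<lambda>k. U (r k)) \<longlonglongrightarrow> 0"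
    using LIMSEQ_subseq_LIMSEQ[OF LIMSEQ_norm_0[OF U] r] by (simp add: comp_def)
  then have "d \<in> Kf f"
    using Kf_mem_of_tilt_level[where U = "\<lambda>k. U (r k)" and Y = "\<lambda>k. Y (r k)", OF assms(2) tilt_le]
      t d by blast
  ultimately have "d = 0"
    using assms(3) by blast
  with \<open>norm d = 1\<close> show False by simp
qed

lemma lsc_setmap_singletonI:
  fixes F :: "'a::real_normed_vector \<Rightarrow> 'b::metric_space set"
  assumes "F u0 = {x0}" "0 < \<delta>" "compact K"
    and bounded: "\<And>u. norm (u - u0) < \<delta> \<Longrightarrow> F u \<noteq> {} \<and> F u \<subseteq> K"
    and closed_graph:
      "\<And>u z x. u \<longlonglongrightarrow> u0 \<Longrightarrow> (\<forall>k. z k \<in> F (u k)) \<Longrightarrow> z \<longlonglongrightarrow> x \<Longrightarrow> x \<in> F u0"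
  shows "lsc_setmap F u0"
  unfolding lsc_setmap_def
proof (intro conjI allI impI)
  show "F u0 \<noteq> {}" using assms(1) by simp
  fix V :: "'b set" assume V: "open V \<and> F u0 \<inter> V \<noteq> {}"
  show "\<exists>U. open U \<and> u0 \<in> U \<and> (\<forall>u\<in>U. F u \<inter> V \<noteq> {})"
  proof (rule ccontr)
    assume no_nhd: "\<not> ?thesis"
    have "\<exists>u. norm (u - u0) < min \<delta> (1 / real (Suc k)) \<and> F u \<inter> V = {}" for k
    proof -
      have "u0 \<in> ball u0 (min \<delta> (1 / real (Suc k)))"
        using \<open>0 < \<delta>\<close> by simp
      then obtain u where "u \<in> ball u0 (min \<delta> (1 / real (Suc k)))" "F u \<inter> V = {}"
        using no_nhd open_ball by blast
      then show ?thesis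
        by (metis dist_norm mem_ball norm_minus_commute)
    qed
    then obtain u where u: "\<And>k. norm (u k - u0) < min \<delta> (1 / real (Suc k))"
      and disjoint: "\<And>k. F (u k) \<inter> V = {}"
      by metis
    then have "\<exists>z. z \<in> F (u k)" for k
      using bounded by fastforce
    then obtain z where z: "\<And>k. z k \<in> F (u k)" by metis
    have "z k \<in> K - V" for k
      using z[of k] bounded[of "u k"] u[of k] disjoint[of k] by auto
    moreover have "compact (K - V)"
      using assms(3) V by (simp add: Diff_eq compact_Int_closed closed_Compl)
    ultimately obtain x r where x: "x \<in> K - V" and r: "strict_mono r" "(z \<circ> r) \<longlonglongrightarrow> x"
      using compact_imp_seq_compact seq_compactE by metis
    have "(\<lambda>k. u k - u0) \<longlonglongrightarrow> 0"
      using u by (intro LIMSEQ_norm_0) simp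
    then have "(u \<circ> r) \<longlonglongrightarrow> u0"
      using LIMSEQ_subseq_LIMSEQ[OF _ r(1)] by (simp add: LIM_zero_iff)
    with r z have "x \<in> F u0"
      by (intro closed_graph[of "u \<circ> r" "z \<circ> r"]) auto
    with x assms(1) V show False by auto
  qed
qed

lemma lsc_setmap_Sol_zero:
  fixes f :: "'a::euclidean_space \<Rightarrow> ereal"
  assumes "lsc_fun f" "\<forall>x. f x \<noteq> -\<infinity>" "closed X"
    and "Sol f X 0 = {x0}" "f x0 = ereal m" "asym_cone X \<inter> Kf f = {0}"
  shows "lsc_setmap (Sol f X) 0"
proof -
  have "x0 \<in> X" using assms(4) by (auto simp: Sol_def)
  obtain \<delta> R where "0 < \<delta>" and level_bounded:
    "\<And>u x. norm u < \<delta> \<Longrightarrow> x \<in> X \<Longrightarrow> tilt f u x \<le> tilt f u x0 \<Longrightarrow> norm x \<le> R"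
    using uniformly_level_bounded[OF \<open>x0 \<in> X\<close> assms(5,6)] by blast
  show ?thesis
  proof (rule lsc_setmap_singletonI[where F = "Sol f X" and K = "cball 0 R"])
    show "Sol f X 0 = {x0}" "0 < \<delta>" "compact (cball (0::'a) R)"
      using assms(4) \<open>0 < \<delta>\<close> by simp_all
  next
    fix u :: 'a assume "norm (u - 0) < \<delta>"
    then have "Sol f X u \<subseteq> cball 0 R"
      using level_bounded \<open>x0 \<in> X\<close> by (auto simp: Sol_def)
    moreover have "Sol f X u \<noteq> {}"
      using \<open>norm (u - 0) < \<delta>\<close> level_bounded
      by (intro Sol_nonempty_if_level_bounded[OF assms(1-3) \<open>x0 \<in> X\<close>]) auto
    ultimately show "Sol f X u \<noteq> {} \<and> Sol f X u \<subseteq> cball 0 R" by blast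
  qed (use Sol_closed_graph[OF assms(1-3)] in blast)
qed

lemma Sol_zero_singleton_if_lsc_setmap:
  fixes f :: "'a::real_inner \<Rightarrow> ereal"
  assumes "proper_fun f" "edom f \<inter> X \<noteq> {}" "lsc_setmap (Sol f X) 0"
  shows "\<exists>x. Sol f X 0 = {x}"
proof -
  obtain x1 where x1: "x1 \<in> Sol f X 0"
    using assms(3) by (auto simp: lsc_setmap_def)
  have "x2 = x1" if x2: "x2 \<in> Sol f X 0" for x2
  proof (rule ccontr)
    assume "x2 \<noteq> x1"
    define w where "w = x2 - x1"
    have w: "0 < norm w" using \<open>x2 \<noteq> x1\<close> by (simp add: w_def)
    have "Sol f X 0 \<inter> ball x1 (norm w / 2) \<noteq> {}"
      using x1 w by auto
    then obtain U where "open U" "0 \<in> U" and U: "\<forall>u\<in>U. Sol f X u \<inter> ball x1 (norm w / 2) \<noteq> {}"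
      using assms(3) unfolding lsc_setmap_def by blast
    then obtain e where "0 < e" "ball 0 e \<subseteq> U"
      using open_contains_ball by blast
    define c where "c = e / (2 * norm w)"
    have "0 < c" using \<open>0 < e\<close> w by (simp add: c_def)
    have "norm (c *\<^sub>R w) < e" using \<open>0 < e\<close> w by (simp add: c_def)
    then have "c *\<^sub>R w \<in> U" using \<open>ball 0 e \<subseteq> U\<close> by auto
    then obtain z where z: "z \<in> Sol f X (c *\<^sub>R w)" "z \<in> ball x1 (norm w / 2)"
      using U by blast
    then have "norm (z - x1) < norm w / 2"
      by (simp add: dist_norm norm_minus_commute)
    obtain m2 where "f x2 = ereal m2"
      using Sol_zero_finite[OF assms(1,2) x2] by blast
    then have "c *\<^sub>R w \<bullet> x2 \<le> c *\<^sub>R w \<bullet> z"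
      using Sol_zero_inner_le[OF x2 z(1)] by blast
    then have "w \<bullet> (x2 - x1) \<le> w \<bullet> (z - x1)"
      using \<open>0 < c\<close> by (simp add: inner_diff_right)
    also have "\<dots> \<le> norm w * norm (z - x1)"
      using Cauchy_Schwarz_ineq2 abs_ge_self order_trans by blast
    also have "\<dots> < norm w * (norm w / 2)"
      using \<open>norm (z - x1) < norm w / 2\<close> w by simp
    finally show False
      by (simp add: w_def power2_norm_eq_inner[symmetric] power2_eq_square)
  qed
  with x1 show ?thesis by blast
qed

lemma convex_closed_add_asym_cone:
  fixes X :: "'a::real_normed_vector set"
  assumes "convex X" "closed X" "x \<in> X" "d \<in> asym_cone X"
  shows "x + d \<in> X"
proof -
  obtain t y where t: "filterlim t at_top sequentially" and y: "\<forall>k. y k \<in> X"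
    and lim: "(\<lambda>k. (1 / t k) *\<^sub>R y k) \<longlonglongrightarrow> d"
    using assms(4) unfolding asym_cone_def by blast
  have "(\<lambda>k. 1 / t k) \<longlonglongrightarrow> 0"
    using tendsto_inverse_0_at_top[OF t] by (simp add: divide_inverse)
  then have "(\<lambda>k. (1 - 1 / t k) *\<^sub>R x + (1 / t k) *\<^sub>R y k) \<longlonglongrightarrow> (1 - 0) *\<^sub>R x + d"
    by (intro tendsto_intros lim)
  moreover have "eventually (\<lambda>k. (1 - 1 / t k) *\<^sub>R x + (1 / t k) *\<^sub>R y k \<in> X) sequentially"
    using eventually_ge_of_filterlim_at_top[OF t, of 1]
    by eventually_elim (use assms(1,3) y in \<open>auto intro: convexD\<close>)
  ultimately show ?thesis
    using Lim_in_closed_set[OF assms(2)] by fastforce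
qed

lemma convex_efun_combination_le:
  assumes "convex_efun f" "f a \<le> ereal \<alpha>" "f b \<le> ereal \<beta>" "0 \<le> l" "l \<le> 1"
  shows "f ((1 - l) *\<^sub>R a + l *\<^sub>R b) \<le> ereal ((1 - l) * \<alpha> + l * \<beta>)"
proof -
  have "(1 - l) *\<^sub>R (a, \<alpha>) + l *\<^sub>R (b, \<beta>) \<in> {(x, t). f x \<le> ereal t}"
    using assms unfolding convex_efun_def by (intro convexD) auto
  then show ?thesis by simp
qed

text \<open>Along sequences realizing \<open>f(t e) / t < \<epsilon>\<close>, the points \<open>(1 - 1/t) x + (1/t) (t e)\<close> tend to
  \<open>x + d\<close> and, by convexity, carry values at most \<open>f x + \<epsilon> - f x / t\<close>.\<close>
lemma convex_efun_add_Kf_le: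
  assumes "convex_efun f" "lsc_fun f" "f x = ereal m" "d \<in> Kf f"
  shows "f (x + d) \<le> f x"
  unfolding assms(3)
proof (rule ereal_le_epsilon2)
  fix \<epsilon> :: real assume "0 < \<epsilon>"
  with assms(4) have "asym_fun f d < ereal \<epsilon>"
    by (simp add: Kf_def le_less_trans)
  then obtain t e where t: "filterlim t at_top sequentially" and e: "e \<longlonglongrightarrow> d"
    and liminf: "liminf (\<lambda>k. f (t k *\<^sub>R e k) / ereal (t k)) < ereal \<epsilon>"
    unfolding asym_fun_def Inf_less_iff by blast
  from liminf have "frequently (\<lambda>k. f (t k *\<^sub>R e k) / ereal (t k) < ereal \<epsilon>) sequentially"
    by (rule frequently_less_of_Liminf_less)
  from frequently_eventually_frequently[OF this eventually_ge_of_filterlim_at_top[OF t, of 1]]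
  have freq:
    "frequently (\<lambda>k. f ((1 - 1 / t k) *\<^sub>R x + e k) \<le> ereal (m + \<epsilon> - m * (1 / t k))) sequentially"
  proof (rule frequently_elim1)
    fix k assume k: "f (t k *\<^sub>R e k) / ereal (t k) < ereal \<epsilon> \<and> 1 \<le> t k"
    then have "f (t k *\<^sub>R e k) \<le> ereal (\<epsilon> * t k)"
      by (intro ereal_divide_less_imp_le) auto
    then have "f ((1 - 1 / t k) *\<^sub>R x + (1 / t k) *\<^sub>R (t k *\<^sub>R e k))
        \<le> ereal ((1 - 1 / t k) * m + (1 / t k) * (\<epsilon> * t k))"
      using assms(3) k by (intro convex_efun_combination_le[OF assms(1)]) auto
    then show "f ((1 - 1 / t k) *\<^sub>R x + e k) \<le> ereal (m + \<epsilon> - m * (1 / t k))"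
      using k by (simp add: algebra_simps)
  qed
  have inv: "(\<lambda>k. 1 / t k) \<longlonglongrightarrow> 0"
    using tendsto_inverse_0_at_top[OF t] by (simp add: divide_inverse)
  have "(\<lambda>k. (1 - 1 / t k) *\<^sub>R x + e k) \<longlonglongrightarrow> (1 - 0) *\<^sub>R x + d"
    by (intro tendsto_intros inv e)
  moreover have "(\<lambda>k. m + \<epsilon> - m * (1 / t k)) \<longlonglongrightarrow> m + \<epsilon> - m * 0"
    by (intro tendsto_intros inv)
  ultimately have "f (x + d) \<le> ereal (m + \<epsilon>)"
    using lsc_fun_le_of_frequently[OF assms(2) _ _ freq] by simp
  then show "f (x + d) \<le> ereal m + ereal \<epsilon>" by simp
qed

lemma asym_cone_Kf_subset_zero:
  assumes "convex X" "closed X" "convex_efun f" "lsc_fun f"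
    and "Sol f X 0 = {x0}" "f x0 = ereal m"
  shows "asym_cone X \<inter> Kf f \<subseteq> {0}"
proof
  fix d assume d: "d \<in> asym_cone X \<inter> Kf f"
  have "x0 \<in> X" "\<forall>y\<in>X. f x0 \<le> f y"
    using assms(5) by (auto simp: Sol_def)
  moreover have "x0 + d \<in> X"
    using assms(1,2) \<open>x0 \<in> X\<close> d by (blast intro: convex_closed_add_asym_cone)
  moreover have "f (x0 + d) \<le> f x0"
    using assms(3,4,6) d by (blast intro: convex_efun_add_Kf_le)
  ultimately have "x0 + d \<in> Sol f X 0"
    by (auto simp: Sol_def intro: order_trans)
  with assms(5) show "d \<in> {0}" by simp
qed

theorem mainTheorem7:
  fixes f :: "'a::euclidean_space \<Rightarrow> ereal" and X :: "'a set"
  assumes "proper_fun f" and "lsc_fun f"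
    and "closed X" and "X \<noteq> {}" and "\<not> bounded (edom f \<inter> X)"
  shows "((\<exists>x. Sol f X 0 = {x}) \<and> asym_cone X \<inter> Kf f = {0} \<longrightarrow> lsc_setmap (Sol f X) 0)
       \<and> (lsc_setmap (Sol f X) 0 \<longrightarrow> (\<exists>x. Sol f X 0 = {x}))
       \<and> (lsc_setmap (Sol f X) 0 \<and> convex X \<and> convex_efun f \<longrightarrow> asym_cone X \<inter> Kf f = {0})"
proof -
  have dom: "edom f \<inter> X \<noteq> {}"
    using assms(5) by auto
  have not_minf: "\<forall>x. f x \<noteq> -\<infinity>"
    using assms(1) by (simp add: proper_fun_def)
  have finite_at: "\<exists>m. f x0 = ereal m" if "Sol f X 0 = {x0}" for x0
    using Sol_zero_finite[OF assms(1) dom] that by simp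
  have sufficient: "lsc_setmap (Sol f X) 0"
    if "Sol f X 0 = {x0}" "asym_cone X \<inter> Kf f = {0}" for x0
    using lsc_setmap_Sol_zero[OF assms(2) not_minf assms(3) that(1) _ that(2)] finite_at[OF that(1)]
    by blast
  have singleton: "\<exists>x. Sol f X 0 = {x}" if "lsc_setmap (Sol f X) 0"
    using Sol_zero_singleton_if_lsc_setmap[OF assms(1) dom that] .
  have cone_trivial: "asym_cone X \<inter> Kf f = {0}"
    if "Sol f X 0 = {x0}" "convex X" "convex_efun f" for x0
  proof -
    have "asym_cone X \<inter> Kf f \<subseteq> {0}"
      using asym_cone_Kf_subset_zero[OF that(2) assms(3) that(3) assms(2) that(1)] finite_at[OF that(1)]
      by blast
    moreover have "0 \<in> asym_cone X \<inter> Kf f"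
      using zero_in_asym_cone[OF assms(4)] zero_in_Kf[OF assms(1)] by blast
    ultimately show ?thesis by blast
  qed
  show ?thesis
    using sufficient singleton cone_trivial by blast
qed

end
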